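(* Consider the symmetrical BSPR network with fixed $p_s,p_d\in[0,1/2)$ ($p_{s,i}=p_s$, $p_{i,d}=p_d$ for all $i$) and $K$ relays. Coded transmission with forwarding relays achieves every rate $R<R_\textnormal{coded,f}$, where $R_\textnormal{coded,f}=I(U;Y_1,\dots,Y_K)$ with $U$ uniform on $\{0,1\}$ and $Y_i=U\oplus Z_i\oplus E_i$, and $R_\textnormal{coded,f}-C\to0$ as $K\to\infty$, where $C$ is the capacity of the network with $K$ relays.
   Context: BSPR network with $K$ relays: at each network use $t$ the source sends $U[t]\in\{0,1\}$; relay $i$ receives $V_i[t]=U[t]\oplus Z_i[t]$, $\Pr\{Z_i=1\}=p_{s,i}$; relay $i$ sends $X_i[t]$ and the destination receives $Y_i[t]=X_i[t]\oplus E_i[t]$, $\Pr\{E_i=1\}=p_{i,d}$; all noises mutually independent and i.i.d. over time. An $(M,n)$ code: message $W$ uniform on $\{0,\dots,M-1\}$, source encoder on $W$, relay encoders $X_i[t]=f_{i,t}(V_i[1],\dots,V_i[t-1])$, destination decoder on all $Y_i$; rate $(\log_2M)/n$; average error probability $P_e$. $R$ is achievable if for every $\epsilon>0$ and all sufficiently large $n$ there is a $(2^{nR},n)$ code with $P_e\le\epsilon$; $C$ is the supremum of achievable rates. A forwarding relay sets $X_i[t]=V_i[t-1]$ ($X_i[1]=0$). Coded transmission with forwarding relays: all relays forward and the source uses a channel code for the effective point-to-point channel from $U$ to $(Y_1,\dots,Y_K)$ (with $n+1$ network uses for $n$ code symbols), the destination decoding from $(Y_1,\dots,Y_K)$. 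*)

theory Defs
  imports "HOL-Probability.Probability"
begin

text \<open>Network uses are indexed t = 0..n-1, relays i = 0..K-1.
 Booleans encode bits (True = 1), xor is inequality on bool.\<close>

definition noise :: "nat \<Rightarrow> nat \<Rightarrow> real \<Rightarrow> (nat \<times> nat \<Rightarrow> bool) pmf" where
  "noise K n p = Pi_pmf ({..<K} \<times> {..<n}) False (\<lambda>_. bernoulli_pmf p)"

text \<open>A code is given by: source encoder enc w t = U[t] for message w;
 relay encoders rel i t vs = X_i[t], where vs = [V_i[0],...,V_i[t-1]] (strictly causal);
 decoder dec applied to the list [Y_1,...,Y_K] of received sequences.\<close>

definition relay_in :: "(nat \<Rightarrow> nat \<Rightarrow> bool) \<Rightarrow> nat \<Rightarrow> (nat \<times> nat \<Rightarrow> bool) \<Rightarrow> nat \<Rightarrow> nat \<Rightarrow> bool" where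
  "relay_in enc w z i t = (enc w t \<noteq> z (i, t))"

definition relay_out :: "(nat \<Rightarrow> nat \<Rightarrow> bool list \<Rightarrow> bool) \<Rightarrow> (nat \<Rightarrow> nat \<Rightarrow> bool) \<Rightarrow> nat
    \<Rightarrow> (nat \<times> nat \<Rightarrow> bool) \<Rightarrow> nat \<Rightarrow> nat \<Rightarrow> bool" where
  "relay_out rel enc w z i t = rel i t (map (relay_in enc w z i) [0..<t])"

definition dest_obs :: "nat \<Rightarrow> nat \<Rightarrow> (nat \<Rightarrow> nat \<Rightarrow> bool list \<Rightarrow> bool) \<Rightarrow> (nat \<Rightarrow> nat \<Rightarrow> bool) \<Rightarrow> nat
    \<Rightarrow> (nat \<times> nat \<Rightarrow> bool) \<Rightarrow> (nat \<times> nat \<Rightarrow> bool) \<Rightarrow> bool list list" where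
  "dest_obs K n rel enc w z e =
     map (\<lambda>i. map (\<lambda>t. relay_out rel enc w z i t \<noteq> e (i, t)) [0..<n]) [0..<K]"

definition error_prob :: "nat \<Rightarrow> real \<Rightarrow> real \<Rightarrow> nat \<Rightarrow> nat \<Rightarrow> (nat \<Rightarrow> nat \<Rightarrow> bool)
    \<Rightarrow> (nat \<Rightarrow> nat \<Rightarrow> bool list \<Rightarrow> bool) \<Rightarrow> (bool list list \<Rightarrow> nat) \<Rightarrow> real" where
  "error_prob K ps pd n M enc rel dec =
     (\<Sum>w<M. measure_pmf.prob (pair_pmf (noise K n ps) (noise K n pd))
               {(z, e). dec (dest_obs K n rel enc w z e) \<noteq> w}) / real M"

definition achievable_with :: "nat \<Rightarrow> real \<Rightarrow> real \<Rightarrow> (nat \<Rightarrow> nat \<Rightarrow> bool list \<Rightarrow> bool) set \<Rightarrow> real \<Rightarrow> bool" where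
  "achievable_with K ps pd Rel R =
     (\<forall>\<epsilon>>0. \<exists>N. \<forall>n\<ge>N. \<exists>enc rel dec. rel \<in> Rel \<and>
        error_prob K ps pd n (nat \<lceil>2 powr (real n * R)\<rceil>) enc rel dec \<le> \<epsilon>)"

definition capacity :: "nat \<Rightarrow> real \<Rightarrow> real \<Rightarrow> real" where
  "capacity K ps pd = Sup {R. achievable_with K ps pd UNIV R}"

definition fwd_relay :: "nat \<Rightarrow> nat \<Rightarrow> bool list \<Rightarrow> bool" where
  "fwd_relay i t vs = (if vs = [] then False else last vs)"

definition mutual_info_pmf :: "('a \<times> 'b) pmf \<Rightarrow> real" where
  "mutual_info_pmf J = (\<Sum>ab\<in>set_pmf J. pmf J ab *
      log 2 (pmf J ab / (pmf (map_pmf fst J) (fst ab) * pmf (map_pmf snd J) (snd ab))))"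

definition coded_fwd_joint :: "nat \<Rightarrow> real \<Rightarrow> real \<Rightarrow> (bool \<times> bool list) pmf" where
  "coded_fwd_joint K ps pd =
     bind_pmf (bernoulli_pmf (1/2)) (\<lambda>u.
     bind_pmf (Pi_pmf {..<K} False (\<lambda>_. bernoulli_pmf ps)) (\<lambda>z.
     bind_pmf (Pi_pmf {..<K} False (\<lambda>_. bernoulli_pmf pd)) (\<lambda>e.
     return_pmf (u, map (\<lambda>i. (u \<noteq> z i) \<noteq> e i) [0..<K]))))"

definition R_coded_f :: "nat \<Rightarrow> real \<Rightarrow> real \<Rightarrow> real" where
  "R_coded_f K ps pd = mutual_info_pmf (coded_fwd_joint K ps pd)"

end

theory Submission
  imports Defs
begin

text \<open>With forwarding relays the destination receives each code symbol one network use late,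
  through \<open>K\<close> independent binary symmetric channels with crossover probability
  \<open>p = p\<^sub>s (1 - p\<^sub>d) + p\<^sub>d (1 - p\<^sub>s)\<close>. For uniformly chosen random codewords and
  maximum-likelihood decoding, Gallager's bound makes the error probability decay exponentially in
  the block length at every rate below the mutual information \<open>I\<^sub>K\<close> of this channel, because
  Gallager's function has slope \<open>-ln 2 * I\<^sub>K\<close> at \<open>\<rho> = 0\<close>. No code carries more than one
  bit per network use, so \<open>I\<^sub>K \<le> C \<le> 1\<close>, and a Bhattacharyya estimate gives
  \<open>1 - I\<^sub>K \<le> 2 / ln 2 * (2 * sqrt (p * (1 - p))) ^ K\<close>, which tends to zero since
  \<open>p < 1/2\<close>.\<close>

lemma sum_lists_length_prod:
  fixes f :: "nat \<Rightarrow> 'a::finite \<Rightarrow> 'b::comm_semiring_1"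
  shows "(\<Sum>ys | length ys = K. \<Prod>i<K. f i (ys ! i)) = (\<Prod>i<K. \<Sum>x\<in>UNIV. f i x)"
proof (induction K arbitrary: f)
  case 0
  then show ?case by simp
next
  case (Suc K)
  have eq: "{ys::'a list. length ys = Suc K} = (\<lambda>(x, ys). x # ys) ` (UNIV \<times> {ys. length ys = K})"
    by (auto simp: length_Suc_conv image_iff)
  have inj: "inj_on (\<lambda>(x, ys). x # ys) (UNIV \<times> {ys::'a list. length ys = K})"
    by (auto simp: inj_on_def)
  have "(\<Sum>ys | length ys = Suc K. \<Prod>i<Suc K. f i (ys ! i))
      = (\<Sum>(x, ys)\<in>UNIV \<times> {ys. length ys = K}. f 0 x * (\<Prod>i<K. f (Suc i) (ys ! i)))"
    unfolding eq sum.reindex[OF inj]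
    by (intro sum.cong refl) (auto simp: prod.lessThan_Suc_shift simp del: prod.lessThan_Suc)
  also have "\<dots> = (\<Sum>x\<in>UNIV. f 0 x * (\<Sum>ys | length ys = K. \<Prod>i<K. f (Suc i) (ys ! i)))"
    by (simp add: sum.cartesian_product[symmetric] sum_distrib_left)
  also have "\<dots> = (\<Sum>x\<in>UNIV. f 0 x) * (\<Prod>i<K. \<Sum>x\<in>UNIV. f (Suc i) x)"
    by (simp add: Suc.IH[of "\<lambda>i. f (Suc i)"] sum_distrib_right)
  also have "\<dots> = (\<Prod>i<Suc K. \<Sum>x\<in>UNIV. f i x)"
    by (simp add: prod.lessThan_Suc_shift del: prod.lessThan_Suc)
  finally show ?case .
qed

lemma real_sqrt_prod: "sqrt (\<Prod>i\<in>A. f i) = (\<Prod>i\<in>A. sqrt (f i))"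
  by (induction A rule: infinite_finite_induct) (auto simp: real_sqrt_mult)

lemma sum_powr_le_card_powr_sum:
  fixes a :: "'a \<Rightarrow> real"
  assumes "finite S" and nonneg: "\<And>j. j \<in> S \<Longrightarrow> a j \<ge> 0" and "0 < \<rho>" "\<rho> \<le> 1"
  shows "(\<Sum>j\<in>S. a j powr \<rho>) \<le> real (card S) powr (1 - \<rho>) * (\<Sum>j\<in>S. a j) powr \<rho>"
proof (cases "(\<Sum>j\<in>S. a j) = 0")
  case True
  then have "\<forall>j\<in>S. a j = 0" using assms sum_nonneg_eq_0_iff by blast
  then show ?thesis by simp
next
  case False
  define n where "n = real (card S)"
  have n: "n > 0" using False assms(1) by (auto simp: n_def card_gt_0_iff)
  define c where "c = (\<Sum>j\<in>S. a j) / n"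
  have "(\<Sum>j\<in>S. a j) \<ge> 0" by (intro sum_nonneg nonneg)
  then have c: "c > 0" using False n by (simp add: c_def)
  \<comment> \<open>Young's inequality with weights \<rho> and 1 - \<rho> linearises each term around the mean c.\<close>
  have tangent: "a j powr \<rho> \<le> c powr \<rho> * (\<rho> * (a j / c) + (1 - \<rho>))" if j: "j \<in> S" for j
  proof (cases "a j = 0")
    case True then show ?thesis using assms c by simp
  next
    case False
    then have "a j / c > 0" using nonneg[OF j] c by simp
    then have "(a j / c) powr \<rho> \<le> \<rho> * (a j / c) + (1 - \<rho>)"
      using Youngs_inequality_0[of \<rho> "1 - \<rho>" "a j / c" 1] assms by simp
    then have "c powr \<rho> * (a j / c) powr \<rho> \<le> c powr \<rho> * (\<rho> * (a j / c) + (1 - \<rho>))"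
      by (simp add: mult_left_mono)
    then show ?thesis using c nonneg[OF j] by (simp add: powr_divide)
  qed
  have "(\<Sum>j\<in>S. a j powr \<rho>) \<le> (\<Sum>j\<in>S. c powr \<rho> * (\<rho> * (a j / c) + (1 - \<rho>)))"
    by (rule sum_mono) (rule tangent)
  also have "\<dots> = c powr \<rho> * (\<rho> * ((\<Sum>j\<in>S. a j) / c) + (1 - \<rho>) * n)"
    by (simp add: sum.distrib n_def flip: sum_distrib_left sum_divide_distrib)
  also have "\<dots> = c powr \<rho> * n"
    using n by (simp add: c_def algebra_simps)
  also have "\<dots> = n powr (1 - \<rho>) * (c * n) powr \<rho>"
    using c n by (simp add: powr_mult powr_diff field_simps)
  finally show ?thesis using n by (simp add: c_def n_def)
qed

lemma ex_le_average:
  fixes f :: "'a \<Rightarrow> real"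
  assumes "finite A" "A \<noteq> {}" "(\<Sum>x\<in>A. f x) \<le> real (card A) * b"
  shows "\<exists>x\<in>A. f x \<le> b"
proof (rule ccontr)
  assume "\<not> ?thesis"
  then have "(\<Sum>x\<in>A. b) < (\<Sum>x\<in>A. f x)"
    using assms by (intro sum_strict_mono) auto
  then show False using assms by simp
qed

lemma sum_PiE_split_coordinate:
  assumes "finite I" "w \<in> I"
  shows "(\<Sum>C\<in>PiE I (\<lambda>_. X). F (C w) (restrict C (I - {w})))
       = (\<Sum>x\<in>X. \<Sum>D\<in>PiE (I - {w}) (\<lambda>_. X). F x D)"
proof -
  have eq: "PiE I (\<lambda>_. X) = (\<lambda>(y, g). g(w := y)) ` (X \<times> PiE (I - {w}) (\<lambda>_. X))"
    using PiE_insert_eq[of w "I - {w}" "\<lambda>_. X"] insert_absorb[OF assms(2)] by simp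
  have inj: "inj_on (\<lambda>(y, g). g(w := y)) (X \<times> PiE (I - {w}) (\<lambda>_. X))"
    by (rule inj_combinator) simp
  have restrict: "restrict (g(w := y)) (I - {w}) = g" if "g \<in> PiE (I - {w}) (\<lambda>_. X)" for g y
    using that by (auto simp: fun_eq_iff PiE_def extensional_def restrict_def)
  have "(\<Sum>C\<in>PiE I (\<lambda>_. X). F (C w) (restrict C (I - {w})))
      = (\<Sum>(y, g)\<in>X \<times> PiE (I - {w}) (\<lambda>_. X). F y g)"
    unfolding eq sum.reindex[OF inj] by (rule sum.cong[OF refl]) (clarsimp simp: restrict)
  then show ?thesis by (simp add: sum.cartesian_product)
qed

lemma sum_PiE_coordinate:
  assumes "finite I" "w \<in> I" "finite X"
  shows "(\<Sum>C\<in>PiE I (\<lambda>_. X). f (C w)) = real (card X) ^ (card I - 1) * (\<Sum>x\<in>X. f x)"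
  using sum_PiE_split_coordinate[OF assms(1,2), of "\<lambda>x D. f x" X] assms
  by (simp add: card_PiE sum_distrib_left)

lemma sum_PiE_powr_sum_le:
  fixes \<phi> :: "'a \<Rightarrow> real"
  assumes \<phi>: "\<And>x. \<phi> x \<ge> 0" and \<rho>: "0 < \<rho>" "\<rho> \<le> 1" and J: "finite J"
    and X: "finite X" "X \<noteq> {}"
  shows "(\<Sum>D\<in>PiE J (\<lambda>_. X). (\<Sum>j\<in>J. \<phi> (D j)) powr \<rho>)
     \<le> real (card X) ^ card J * real (card J) powr \<rho> * ((\<Sum>x\<in>X. \<phi> x) / real (card X)) powr \<rho>"
proof -
  define N where "N = real (card X)"
  define A where "A = (\<Sum>x\<in>X. \<phi> x) / N"
  have N: "N > 0" using X by (simp add: N_def card_gt_0_iff)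
  have A: "A \<ge> 0" unfolding A_def using N by (intro divide_nonneg_pos sum_nonneg \<phi>)
  have coordinate: "(\<Sum>D\<in>PiE J (\<lambda>_. X). \<phi> (D j)) = N ^ card J * A" if "j \<in> J" for j
  proof -
    have "N ^ card J = N ^ (card J - 1) * N"
      using that J by (metis card_gt_0_iff empty_iff power_minus_mult)
    then show ?thesis
      using sum_PiE_coordinate[OF J that X(1), of \<phi>] N by (simp add: A_def N_def)
  qed
  have "(\<Sum>D\<in>PiE J (\<lambda>_. X). \<Sum>j\<in>J. \<phi> (D j)) = (\<Sum>j\<in>J. \<Sum>D\<in>PiE J (\<lambda>_. X). \<phi> (D j))"
    by (rule sum.swap)
  also have "\<dots> = N ^ card J * (real (card J) * A)"
    by (simp add: coordinate)
  finally have total: "(\<Sum>D\<in>PiE J (\<lambda>_. X). \<Sum>j\<in>J. \<phi> (D j)) = N ^ card J * (real (card J) * A)" .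
  have "(\<Sum>D\<in>PiE J (\<lambda>_. X). (\<Sum>j\<in>J. \<phi> (D j)) powr \<rho>)
      \<le> real (card (PiE J (\<lambda>_. X))) powr (1 - \<rho>) * (\<Sum>D\<in>PiE J (\<lambda>_. X). \<Sum>j\<in>J. \<phi> (D j)) powr \<rho>"
    using J X \<rho> by (intro sum_powr_le_card_powr_sum) (auto intro!: sum_nonneg \<phi> finite_PiE)
  also have "\<dots> = (N ^ card J) powr (1 - \<rho>) * (N ^ card J * (real (card J) * A)) powr \<rho>"
    using J by (simp add: total card_PiE N_def)
  also have "\<dots> = N ^ card J * real (card J) powr \<rho> * A powr \<rho>"
    using N A \<rho> by (simp add: powr_mult mult_ac flip: powr_add)
  finally show ?thesis by (simp add: N_def A_def)
qed

section \<open>Gallager's random coding bound\<close>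

definition memoryless :: "('a \<Rightarrow> 'b \<Rightarrow> real) \<Rightarrow> nat \<Rightarrow> (nat \<Rightarrow> 'a) \<Rightarrow> (nat \<Rightarrow> 'b) \<Rightarrow> real" where
  "memoryless W m x y = (\<Prod>t<m. W (x t) (y t))"

definition ml_decode ::
    "('a \<Rightarrow> 'b \<Rightarrow> real) \<Rightarrow> nat \<Rightarrow> nat \<Rightarrow> (nat \<Rightarrow> nat \<Rightarrow> 'a) \<Rightarrow> (nat \<Rightarrow> 'b) \<Rightarrow> nat" where
  "ml_decode W m M C y = arg_max_on (\<lambda>w. memoryless W m (C w) y) {..<M}"

lemma memoryless_nonneg: "(\<And>x y. W x y \<ge> 0) \<Longrightarrow> memoryless W m x y \<ge> 0"
  by (auto simp: memoryless_def intro!: prod_nonneg)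

lemma ml_decode:
  assumes "M > 0"
  shows ml_decode_less: "ml_decode W m M C y < M"
    and ml_decode_max: "w < M \<Longrightarrow> memoryless W m (C w) y \<le> memoryless W m (C (ml_decode W m M C y)) y"
proof -
  let ?L = "\<lambda>w. memoryless W m (C w) y"
  have "Max (?L ` {..<M}) \<in> ?L ` {..<M}"
    using assms by (intro Max_in) auto
  then obtain w0 where w0: "w0 < M" and max: "Max (?L ` {..<M}) = ?L w0"
    by blast
  have le: "?L w \<le> ?L w0" if "w < M" for w
    using Max_ge[of "?L ` {..<M}" "?L w"] that max by simp
  have "ml_decode W m M C y < M \<and> (\<forall>w<M. ?L w \<le> ?L (ml_decode W m M C y))"
    unfolding ml_decode_def arg_max_on_def
  proof (rule arg_maxI[where P = "\<lambda>w. w \<in> {..<M}"])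
    show "w0 \<in> {..<M}" using w0 by simp
    show "\<not> ?L w > ?L w0" if "w \<in> {..<M}" for w
      using le that by (simp add: not_less)
    show "d < M \<and> (\<forall>w<M. ?L w \<le> ?L d)" if "d \<in> {..<M}" "\<forall>w. w \<in> {..<M} \<longrightarrow> \<not> ?L w > ?L d" for d
      using that by (auto simp: not_less)
  qed
  then show "ml_decode W m M C y < M" and "w < M \<Longrightarrow> ?L w \<le> ?L (ml_decode W m M C y)"
    by auto
qed

text \<open>Gallager's bound on the error indicator: if the maximum-likelihood decoder errs on \<open>w\<close>,
  some competitor is at least as likely as \<open>w\<close>.\<close>
lemma ml_decode_error_le:
  assumes W: "\<And>x y. W x y \<ge> 0" and w: "w < M" and \<rho>: "0 < \<rho>"
  shows "memoryless W m (C w) y * of_bool (ml_decode W m M C y \<noteq> w)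
     \<le> memoryless W m (C w) y powr (1/(1+\<rho>))
        * (\<Sum>w'\<in>{..<M} - {w}. memoryless W m (C w') y powr (1/(1+\<rho>))) powr \<rho>"
proof (cases "ml_decode W m M C y = w")
  case True then show ?thesis by simp
next
  case False
  define s where "s = 1/(1+\<rho>)"
  define d where "d = ml_decode W m M C y"
  define a where "a = memoryless W m (C w) y"
  have s: "s > 0" using \<rho> by (simp add: s_def)
  have a: "a \<ge> 0" by (simp add: a_def memoryless_nonneg W)
  have M: "M > 0" using w by simp
  have "a powr s \<le> memoryless W m (C d) y powr s"
    using ml_decode_max[OF M w] a s by (intro powr_mono2) (auto simp: a_def d_def)
  also have "\<dots> \<le> (\<Sum>w'\<in>{..<M} - {w}. memoryless W m (C w') y powr s)"
    using ml_decode_less[OF M] False by (intro member_le_sum) (auto simp: d_def)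
  finally have "(a powr s) powr \<rho> \<le> (\<Sum>w'\<in>{..<M} - {w}. memoryless W m (C w') y powr s) powr \<rho>"
    using \<rho> by (intro powr_mono2) auto
  then have "a powr s * (a powr s) powr \<rho>
      \<le> a powr s * (\<Sum>w'\<in>{..<M} - {w}. memoryless W m (C w') y powr s) powr \<rho>"
    by (intro mult_left_mono) auto
  moreover have "a powr s * (a powr s) powr \<rho> = a"
  proof -
    have "a powr s * (a powr s) powr \<rho> = a powr (s + s * \<rho>)"
      by (simp add: powr_powr powr_add)
    also have "s + s * \<rho> = 1" using \<rho> by (simp add: s_def field_simps)
    finally show ?thesis using a by simp
  qed
  ultimately show ?thesis using False by (simp add: a_def s_def d_def)
qed

lemma sum_codebooks_le:
  fixes \<phi> :: "'a \<Rightarrow> real"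
  assumes \<phi>: "\<And>x. \<phi> x \<ge> 0" and \<rho>: "0 < \<rho>" "\<rho> \<le> 1" and w: "w < M"
    and X: "finite X" "X \<noteq> {}"
  shows "(\<Sum>C\<in>PiE {..<M} (\<lambda>_. X). \<phi> (C w) * (\<Sum>w'\<in>{..<M} - {w}. \<phi> (C w')) powr \<rho>)
     \<le> real (card X) ^ M * real (M - 1) powr \<rho> * ((\<Sum>x\<in>X. \<phi> x) / real (card X)) powr (1 + \<rho>)"
proof -
  define J where "J = {..<M} - {w}"
  define N where "N = real (card X)"
  define A where "A = (\<Sum>x\<in>X. \<phi> x) / N"
  have N: "N > 0" using X by (simp add: N_def card_gt_0_iff)
  have A: "A \<ge> 0" unfolding A_def using N by (intro divide_nonneg_pos sum_nonneg \<phi>)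
  have J: "finite J" "card J = M - 1" using w by (auto simp: J_def)
  have "(\<Sum>C\<in>PiE {..<M} (\<lambda>_. X). \<phi> (C w) * (\<Sum>w'\<in>J. \<phi> (C w')) powr \<rho>)
      = (\<Sum>C\<in>PiE {..<M} (\<lambda>_. X). \<phi> (C w) * (\<Sum>w'\<in>J. \<phi> (restrict C J w')) powr \<rho>)"
    by (intro sum.cong refl arg_cong2[where f = "(*)"] arg_cong2[where f = "(powr)"]) (auto simp: J_def)
  also have "\<dots> = (\<Sum>x\<in>X. \<Sum>D\<in>PiE J (\<lambda>_. X). \<phi> x * (\<Sum>w'\<in>J. \<phi> (D w')) powr \<rho>)"
    unfolding J_def using w by (intro sum_PiE_split_coordinate) auto
  also have "\<dots> = N * A * (\<Sum>D\<in>PiE J (\<lambda>_. X). (\<Sum>w'\<in>J. \<phi> (D w')) powr \<rho>)"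
    using N by (simp add: A_def flip: sum_product)
  also have "\<dots> \<le> N * A * (N ^ (M - 1) * real (M - 1) powr \<rho> * A powr \<rho>)"
    using sum_PiE_powr_sum_le[of \<phi> \<rho> J X, OF \<phi> \<rho> J(1) X] N A J sum_nonneg[of X \<phi>] \<phi>
    by (intro mult_left_mono) (simp_all add: N_def A_def)
  also have "\<dots> = N ^ M * real (M - 1) powr \<rho> * A powr (1 + \<rho>)"
    using w A by (cases M) (auto simp: powr_add mult_ac)
  finally show ?thesis by (simp add: J_def N_def A_def)
qed

text \<open>For the uniform input distribution this is \<open>2 powr (- E\<^sub>0 \<rho>)\<close> in Gallager's notation.\<close>
definition gallager_fn :: "('a::finite \<Rightarrow> 'b \<Rightarrow> real) \<Rightarrow> 'b set \<Rightarrow> real \<Rightarrow> real" where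
  "gallager_fn W B \<rho> = (\<Sum>y\<in>B. (\<Sum>x\<in>UNIV. W x y powr (1/(1+\<rho>)) / real CARD('a)) powr (1+\<rho>))"

lemma gallager_fn_nonneg: "gallager_fn W B \<rho> \<ge> 0"
  by (simp add: gallager_fn_def sum_nonneg)

lemma gallager_fn_power:
  fixes W :: "'a::finite \<Rightarrow> 'b \<Rightarrow> real"
  assumes W: "\<And>x y. W x y \<ge> 0" and B: "finite B"
  shows "(\<Sum>y\<in>PiE {..<m} (\<lambda>_. B).
            ((\<Sum>x\<in>PiE {..<m} (\<lambda>_. UNIV). memoryless W m x y powr (1/(1+\<rho>))) / real CARD('a) ^ m)
              powr (1+\<rho>))
       = gallager_fn W B \<rho> ^ m"
proof -
  let ?s = "1/(1+\<rho>)"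
  have average: "(\<Sum>x\<in>PiE {..<m} (\<lambda>_. UNIV). memoryless W m x y powr ?s) / real CARD('a) ^ m
      = (\<Prod>t<m. \<Sum>a\<in>UNIV. W a (y t) powr ?s / real CARD('a))" for y
  proof -
    have "(\<Sum>x\<in>PiE {..<m} (\<lambda>_. UNIV). memoryless W m x y powr ?s)
        = (\<Sum>x\<in>PiE {..<m} (\<lambda>_. UNIV). \<Prod>t<m. W (x t) (y t) powr ?s)"
      using W by (simp add: memoryless_def prod_powr_distrib)
    also have "\<dots> = (\<Prod>t<m. \<Sum>a\<in>UNIV. W a (y t) powr ?s)"
      by (rule prod_sum_PiE[symmetric]) auto
    finally show ?thesis by (simp add: prod_dividef flip: sum_divide_distrib)
  qed
  have "(\<Sum>y\<in>PiE {..<m} (\<lambda>_. B).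
        ((\<Sum>x\<in>PiE {..<m} (\<lambda>_. UNIV). memoryless W m x y powr ?s) / real CARD('a) ^ m) powr (1+\<rho>))
      = (\<Sum>y\<in>PiE {..<m} (\<lambda>_. B). \<Prod>t<m. (\<Sum>a\<in>UNIV. W a (y t) powr ?s / real CARD('a)) powr (1+\<rho>))"
    using W by (simp add: average prod_powr_distrib sum_nonneg)
  also have "\<dots> = (\<Prod>t<m. \<Sum>y\<in>B. (\<Sum>a\<in>UNIV. W a y powr ?s / real CARD('a)) powr (1+\<rho>))"
    by (rule prod_sum_PiE[symmetric]) (use B in auto)
  finally show ?thesis by (simp add: gallager_fn_def)
qed

theorem gallager_random_coding:
  fixes W :: "'a::finite \<Rightarrow> 'b \<Rightarrow> real"
  assumes W: "\<And>x y. W x y \<ge> 0" and B: "finite B" and \<rho>: "0 < \<rho>" "\<rho> \<le> 1" and M: "M > 0"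
  shows "\<exists>C. (\<Sum>w<M. \<Sum>y\<in>PiE {..<m} (\<lambda>_. B).
                memoryless W m (C w) y * of_bool (ml_decode W m M C y \<noteq> w))
          \<le> real M * real (M - 1) powr \<rho> * gallager_fn W B \<rho> ^ m"
proof -
  define s where "s = 1/(1+\<rho>)"
  define Xs where "Xs = PiE {..<m} (\<lambda>_. UNIV :: 'a set)"
  define Cs where "Cs = PiE {..<M} (\<lambda>_. Xs)"
  define Ys where "Ys = PiE {..<m} (\<lambda>_. B)"
  define A where "A y = (\<Sum>x\<in>Xs. memoryless W m x y powr s) / real CARD('a) ^ m" for y
  define T where "T C = (\<Sum>w<M. \<Sum>y\<in>Ys. memoryless W m (C w) y powr s
      * (\<Sum>w'\<in>{..<M} - {w}. memoryless W m (C w') y powr s) powr \<rho>)" for C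
  define bound where "bound = real M * real (M - 1) powr \<rho> * gallager_fn W B \<rho> ^ m"
  have Xs: "finite Xs" "Xs \<noteq> {}" "card Xs = CARD('a) ^ m"
    by (auto simp: Xs_def card_PiE intro!: finite_PiE)
  have Cs: "finite Cs" "Cs \<noteq> {}" using Xs by (auto simp: Cs_def PiE_eq_empty_iff intro!: finite_PiE)
  have "(\<Sum>C\<in>Cs. T C) = (\<Sum>w<M. \<Sum>y\<in>Ys. \<Sum>C\<in>Cs. memoryless W m (C w) y powr s
      * (\<Sum>w'\<in>{..<M} - {w}. memoryless W m (C w') y powr s) powr \<rho>)"
    unfolding T_def by (simp add: sum.swap[of _ Cs])
  also have "\<dots> \<le> (\<Sum>w<M. \<Sum>y\<in>Ys. real (card Cs) * real (M - 1) powr \<rho> * A y powr (1 + \<rho>))"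
    unfolding Cs_def A_def using sum_codebooks_le[of "\<lambda>x. memoryless W m x _ powr s" \<rho> _ M Xs] \<rho> Xs
    by (intro sum_mono) (simp add: card_PiE)
  also have "\<dots> = real (card Cs) * (real M * real (M - 1) powr \<rho> * (\<Sum>y\<in>Ys. A y powr (1 + \<rho>)))"
    using M by (simp add: sum_distrib_left mult_ac of_nat_diff)
  also have "(\<Sum>y\<in>Ys. A y powr (1 + \<rho>)) = gallager_fn W B \<rho> ^ m"
    unfolding A_def Xs_def Ys_def s_def by (rule gallager_fn_power) (simp_all add: W B)
  finally obtain C where C: "T C \<le> bound"
    using ex_le_average[OF Cs] unfolding bound_def by blast
  have "(\<Sum>w<M. \<Sum>y\<in>Ys. memoryless W m (C w) y * of_bool (ml_decode W m M C y \<noteq> w)) \<le> T C"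
    unfolding T_def s_def by (intro sum_mono ml_decode_error_le W \<rho>) auto
  also have "\<dots> \<le> bound" by (rule C)
  finally show ?thesis unfolding bound_def Ys_def by blast
qed

section \<open>Gallager's function and mutual information\<close>

definition output_prob :: "('a::finite \<Rightarrow> 'b \<Rightarrow> real) \<Rightarrow> 'b \<Rightarrow> real" where
  "output_prob W y = (\<Sum>x\<in>UNIV. W x y / real CARD('a))"

definition mutual_info_uniform :: "('a::finite \<Rightarrow> 'b \<Rightarrow> real) \<Rightarrow> 'b set \<Rightarrow> real" where
  "mutual_info_uniform W B =
     (\<Sum>x\<in>UNIV. \<Sum>y\<in>B. W x y / real CARD('a) * log 2 (W x y / output_prob W y))"

lemma output_prob_nonneg: "(\<And>x y. W x y \<ge> 0) \<Longrightarrow> output_prob W y \<ge> 0"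
  by (simp add: output_prob_def sum_nonneg)

lemma output_prob_eq_0_iff:
  assumes "\<And>x y. W x y \<ge> 0"
  shows "output_prob W y = 0 \<longleftrightarrow> (\<forall>x. W x y = 0)"
  unfolding output_prob_def using assms by (simp add: sum_nonneg_eq_0_iff)

lemma gallager_fn_0:
  fixes W :: "'a::finite \<Rightarrow> 'b \<Rightarrow> real"
  assumes W: "\<And>x y. W x y \<ge> 0" and stochastic: "\<And>x. (\<Sum>y\<in>B. W x y) = 1"
  shows "gallager_fn W B 0 = 1"
proof -
  have "gallager_fn W B 0 = (\<Sum>x\<in>UNIV. (\<Sum>y\<in>B. W x y) / real CARD('a))"
    unfolding gallager_fn_def using W
    by (simp add: sum_nonneg powr_one sum.swap[of _ B] flip: sum_divide_distrib)
  then show ?thesis by (simp add: stochastic)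
qed

lemma has_real_derivative_powr_inverse_1_plus:
  fixes c :: real
  assumes "c \<ge> 0"
  shows "((\<lambda>\<rho>. c powr (1/(1+\<rho>))) has_real_derivative -(c * ln c)) (at 0)"
proof (cases "c = 0")
  case True then show ?thesis by simp
next
  case False
  then have "((\<lambda>\<rho>. c powr (1/(1+\<rho>))) has_real_derivative
      c powr (1/(1+0)) * (-1 * ln c + 0 * (1/(1+0)) / c)) (at 0)"
    using assms by (intro DERIV_powr DERIV_const) (auto intro!: derivative_eq_intros)
  then show ?thesis using assms by simp
qed

lemma gallager_term_has_derivative:
  fixes W :: "'a::finite \<Rightarrow> 'b \<Rightarrow> real"
  assumes W: "\<And>x y. W x y \<ge> 0"
  shows "((\<lambda>\<rho>. (\<Sum>x\<in>UNIV. W x y powr (1/(1+\<rho>)) / real CARD('a)) powr (1+\<rho>)) has_real_derivative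
          output_prob W y * ln (output_prob W y) - (\<Sum>x\<in>UNIV. W x y * ln (W x y) / real CARD('a))) (at 0)"
proof -
  define a where "a \<rho> = (\<Sum>x\<in>UNIV. W x y powr (1/(1+\<rho>)) / real CARD('a))" for \<rho>
  define a' where "a' = (\<Sum>x\<in>UNIV. - (W x y * ln (W x y)) / real CARD('a))"
  have da: "(a has_real_derivative a') (at 0)"
    unfolding a_def a'_def
    by (intro DERIV_sum DERIV_cdivide has_real_derivative_powr_inverse_1_plus W)
  have a0: "a 0 = output_prob W y"
    using W by (simp add: a_def output_prob_def powr_one)
  show ?thesis
  proof (cases "output_prob W y = 0")
    case True
    then have "W x y = 0" for x using output_prob_eq_0_iff[of W y] W by simp
    then show ?thesis using True by simp
  next
    case False
    then have pos: "a 0 > 0"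
      using a0 W by (simp add: output_prob_def order.not_eq_order_implies_strict sum_nonneg)
    have "((\<lambda>\<rho>. a \<rho> powr (1+\<rho>)) has_real_derivative
        a 0 powr (1+0) * (1 * ln (a 0) + a' * (1+0) / a 0)) (at 0)"
      by (rule DERIV_powr[OF da pos]) (auto intro!: derivative_eq_intros)
    then show ?thesis
      unfolding a_def[symmetric] using pos a0 by (simp add: a'_def sum_negf algebra_simps)
  qed
qed

lemma gallager_fn_has_derivative:
  fixes W :: "'a::finite \<Rightarrow> 'b \<Rightarrow> real"
  assumes W: "\<And>x y. W x y \<ge> 0"
  shows "(gallager_fn W B has_real_derivative - ln 2 * mutual_info_uniform W B) (at 0)"
proof -
  have pointwise: "output_prob W y * ln (output_prob W y) - (\<Sum>x\<in>UNIV. W x y * ln (W x y) / real CARD('a))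
      = - ln 2 * (\<Sum>x\<in>UNIV. W x y / real CARD('a) * log 2 (W x y / output_prob W y))" for y
  proof -
    have "W x y / real CARD('a) * log 2 (W x y / output_prob W y) * ln 2
        = W x y * ln (W x y) / real CARD('a) - W x y / real CARD('a) * ln (output_prob W y)" for x
    proof (cases "W x y = 0")
      case False
      then have "W x y > 0" "output_prob W y > 0"
        using W[of x y] output_prob_eq_0_iff[of W y] output_prob_nonneg[of W y] W
        by (auto simp: order.not_eq_order_implies_strict)
      then show ?thesis by (simp add: log_def ln_div field_simps)
    qed simp
    then have "- ln 2 * (\<Sum>x\<in>UNIV. W x y / real CARD('a) * log 2 (W x y / output_prob W y))
        = (\<Sum>x\<in>UNIV. W x y / real CARD('a)) * ln (output_prob W y) - (\<Sum>x\<in>UNIV. W x y * ln (W x y) / real CARD('a))"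
      by (simp add: sum_distrib_left sum_distrib_right sum_subtractf mult.commute[of "ln 2"])
    then show ?thesis by (simp add: output_prob_def)
  qed
  have "(gallager_fn W B has_real_derivative
      (\<Sum>y\<in>B. output_prob W y * ln (output_prob W y) - (\<Sum>x\<in>UNIV. W x y * ln (W x y) / real CARD('a)))) (at 0)"
    unfolding gallager_fn_def by (intro DERIV_sum gallager_term_has_derivative W)
  then show ?thesis
    unfolding pointwise mutual_info_uniform_def by (simp add: sum_distrib_left sum.swap[of _ B])
qed

text \<open>At \<open>\<rho> = 0\<close> the function \<open>\<lambda>\<rho>. gallager_fn W B \<rho> * 2 powr (\<rho> * R)\<close> equals 1 and
  has slope \<open>ln 2 * (R - mutual_info_uniform W B) < 0\<close>.\<close>
lemma gallager_exponent_pos: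
  fixes W :: "'a::finite \<Rightarrow> 'b \<Rightarrow> real"
  assumes W: "\<And>x y. W x y \<ge> 0" and stochastic: "\<And>x. (\<Sum>y\<in>B. W x y) = 1"
    and R: "R < mutual_info_uniform W B"
  shows "\<exists>\<rho>. 0 < \<rho> \<and> \<rho> \<le> 1 \<and> gallager_fn W B \<rho> * 2 powr (\<rho> * R) < 1"
proof -
  define F where "F \<rho> = gallager_fn W B \<rho> * 2 powr (\<rho> * R)" for \<rho>
  have "((\<lambda>\<rho>. 2 powr (\<rho> * R)) has_real_derivative 2 powr (0 * R) * (R * ln 2 + 0 * (0 * R) / 2)) (at 0)"
    by (rule DERIV_powr[OF DERIV_const]) (auto intro!: derivative_eq_intros)
  then have exp: "((\<lambda>\<rho>. 2 powr (\<rho> * R)) has_real_derivative R * ln 2) (at 0)"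
    by simp
  have "(F has_real_derivative
      - ln 2 * mutual_info_uniform W B * 2 powr (0 * R) + R * ln 2 * gallager_fn W B 0) (at 0)"
    unfolding F_def by (rule DERIV_mult[OF gallager_fn_has_derivative[OF W] exp])
  then have "(F has_real_derivative ln 2 * (R - mutual_info_uniform W B)) (at 0)"
    by (simp add: gallager_fn_0[OF W stochastic] algebra_simps)
  moreover have "ln 2 * (R - mutual_info_uniform W B) < 0"
    using R by (simp add: mult_pos_neg)
  ultimately obtain d where d: "d > 0" "\<And>h. h > 0 \<Longrightarrow> h < d \<Longrightarrow> F 0 > F (0 + h)"
    by (metis DERIV_neg_dec_right)
  define \<rho> where "\<rho> = min (d/2) 1"
  have "F \<rho> < F 0" using d by (auto simp: \<rho>_def)
  moreover have "F 0 = 1" by (simp add: F_def gallager_fn_0[OF W stochastic])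
  ultimately show ?thesis using d by (intro exI[of _ \<rho>]) (auto simp: \<rho>_def F_def)
qed

lemma log2_one_plus_le_sqrt:
  assumes "0 \<le> x"
  shows "log 2 (1 + x) \<le> 2 * sqrt x / ln 2"
proof -
  have "1 + x \<le> (1 + sqrt x)\<^sup>2" using assms by (simp add: power2_eq_square algebra_simps)
  then have "ln (1 + x) \<le> ln ((1 + sqrt x)\<^sup>2)" using assms by (intro ln_mono) auto
  also have "\<dots> = 2 * ln (1 + sqrt x)" using assms by (simp add: ln_realpow)
  also have "\<dots> \<le> 2 * sqrt x" using ln_add_one_self_le_self[of "sqrt x"] assms by simp
  finally show ?thesis by (simp add: log_def divide_right_mono)
qed

lemma output_prob_bool: "output_prob W y = (W x y + W (\<not> x) y) / 2"
  by (cases x) (simp_all add: output_prob_def UNIV_bool add_divide_distrib)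

lemma mutual_info_uniform_bool_summand_ge:
  fixes W :: "bool \<Rightarrow> 'b \<Rightarrow> real"
  assumes W: "\<And>x y. W x y \<ge> 0"
  shows "W x y / 2 - W x y / 2 * log 2 (W x y / output_prob W y) \<le> sqrt (W x y * W (\<not> x) y) / ln 2"
proof (cases "W x y = 0")
  case False
  then have pos: "W x y > 0" using W[of x y] by simp
  have out: "output_prob W y > 0" using pos W[of "\<not> x" y] by (simp add: output_prob_bool[of _ _ x])
  have "1 + W (\<not> x) y / W x y = 2 * output_prob W y / W x y"
    using pos by (simp add: output_prob_bool[of _ _ x] field_simps)
  then have "1 - log 2 (W x y / output_prob W y) = log 2 (1 + W (\<not> x) y / W x y)"
    using pos out by (simp add: log_divide log_mult)
  then have "W x y / 2 - W x y / 2 * log 2 (W x y / output_prob W y)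
      = W x y / 2 * log 2 (1 + W (\<not> x) y / W x y)"
    by (metis mult.right_neutral right_diff_distrib)
  also have "\<dots> \<le> W x y / 2 * (2 * sqrt (W (\<not> x) y / W x y) / ln 2)"
    using pos W by (intro mult_left_mono log2_one_plus_le_sqrt) auto
  also have "\<dots> = sqrt (W x y * W (\<not> x) y) / ln 2"
    using pos by (simp add: real_sqrt_divide real_sqrt_mult field_simps)
  finally show ?thesis .
qed (simp add: W)

lemma one_minus_mutual_info_le_bhattacharyya:
  fixes W :: "bool \<Rightarrow> 'b \<Rightarrow> real"
  assumes W: "\<And>x y. W x y \<ge> 0" and stochastic: "\<And>x. (\<Sum>y\<in>B. W x y) = 1"
  shows "1 - mutual_info_uniform W B \<le> 2 / ln 2 * (\<Sum>y\<in>B. sqrt (W True y * W False y))"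
proof -
  have "1 = (\<Sum>x\<in>UNIV. \<Sum>y\<in>B. W x y / 2)"
    by (simp add: UNIV_bool stochastic flip: sum_divide_distrib)
  then have "1 - mutual_info_uniform W B
      = (\<Sum>x\<in>UNIV. \<Sum>y\<in>B. W x y / 2 - W x y / 2 * log 2 (W x y / output_prob W y))"
    by (simp add: mutual_info_uniform_def sum_subtractf)
  also have "\<dots> \<le> (\<Sum>x\<in>UNIV. \<Sum>y\<in>B. sqrt (W x y * W (\<not> x) y) / ln 2)"
    by (intro sum_mono mutual_info_uniform_bool_summand_ge W)
  also have "\<dots> = 2 / ln 2 * (\<Sum>y\<in>B. sqrt (W True y * W False y))"
    by (simp add: UNIV_bool sum_divide_distrib[symmetric] mult.commute)
  finally show ?thesis .
qed

lemma measure_pmf_eq_sum_support: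
  assumes "finite S" "set_pmf M \<subseteq> S"
  shows "measure_pmf.prob M A = (\<Sum>x\<in>S. pmf M x * of_bool (x \<in> A))"
proof -
  have "A \<inter> set_pmf M = (A \<inter> S) \<inter> set_pmf M" using assms(2) by blast
  then have "measure_pmf.prob M A = measure_pmf.prob M (A \<inter> S)"
    by (metis measure_Int_set_pmf)
  also have "\<dots> = (\<Sum>x\<in>S. if x \<in> A then pmf M x else 0)"
    using assms(1) by (simp add: measure_measure_pmf_finite sum.If_cases Int_commute)
  also have "\<dots> = (\<Sum>x\<in>S. pmf M x * of_bool (x \<in> A))"
    by (intro sum.cong) auto
  finally show ?thesis .
qed

lemma mutual_info_pmf_uniform_input:
  fixes J :: "('a::finite \<times> 'b) pmf" and W :: "'a \<Rightarrow> 'b \<Rightarrow> real"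
  assumes stochastic: "\<And>x. (\<Sum>y\<in>B. W x y) = 1"
    and J: "\<And>x y. pmf J (x, y) = (if y \<in> B then W x y / real CARD('a) else 0)"
  shows "mutual_info_pmf J = mutual_info_uniform W B"
proof -
  have B: "finite B" using stochastic by (metis sum.infinite zero_neq_one)
  then have fin: "finite (UNIV \<times> B :: ('a \<times> 'b) set)" by simp
  have support: "set_pmf J \<subseteq> UNIV \<times> B"
    using J by (auto simp: set_pmf_iff split: if_splits)
  have prob_J: "measure_pmf.prob J A = (\<Sum>x\<in>UNIV. \<Sum>y\<in>B. pmf J (x, y) * of_bool ((x, y) \<in> A))" for A
    by (simp add: measure_pmf_eq_sum_support[OF fin support] sum.cartesian_product)
  have fst: "pmf (map_pmf fst J) x = 1 / real CARD('a)" for x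
  proof -
    have "pmf (map_pmf fst J) x = (\<Sum>y\<in>B. \<Sum>x'\<in>UNIV. pmf J (x', y) * of_bool (x' = x))"
      unfolding pmf_map prob_J by (subst sum.swap) simp
    also have "\<dots> = (\<Sum>y\<in>B. pmf J (x, y))"
      by simp
    also have "\<dots> = (\<Sum>y\<in>B. W x y) / real CARD('a)"
      by (simp add: J sum_divide_distrib)
    finally show ?thesis by (simp add: stochastic)
  qed
  have snd: "pmf (map_pmf snd J) y = output_prob W y" if "y \<in> B" for y
  proof -
    have "pmf (map_pmf snd J) y = (\<Sum>x\<in>UNIV. \<Sum>y'\<in>B. pmf J (x, y') * of_bool (y' = y))"
      unfolding pmf_map prob_J by simp
    also have "\<dots> = (\<Sum>x\<in>UNIV. pmf J (x, y))"
      using that B by (simp add: Int_absorb1)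
    also have "\<dots> = output_prob W y"
      using that by (simp add: J output_prob_def)
    finally show ?thesis .
  qed
  have "mutual_info_pmf J = (\<Sum>ab\<in>UNIV \<times> B. pmf J ab *
      log 2 (pmf J ab / (pmf (map_pmf fst J) (fst ab) * pmf (map_pmf snd J) (snd ab))))"
    unfolding mutual_info_pmf_def
    using support fin by (intro sum.mono_neutral_left) (auto simp: set_pmf_iff)
  also have "\<dots> = mutual_info_uniform W B"
    unfolding mutual_info_uniform_def sum.cartesian_product
    by (intro sum.cong refl) (auto simp: J fst snd)
  finally show ?thesis .
qed

lemma map_pmf_pair_Pi_pmf:
  assumes A: "finite A" and c: "c d d = d"
  shows "map_pmf (\<lambda>(f, g) x. c (f x) (g x)) (pair_pmf (Pi_pmf A d P) (Pi_pmf A d Q))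
       = Pi_pmf A d (\<lambda>x. map_pmf (\<lambda>(a, b). c a b) (pair_pmf (P x) (Q x)))"
proof -
  have "Pi_pmf A d (\<lambda>x. map_pmf (\<lambda>(a, b). c a b) (pair_pmf (P x) (Q x)))
      = Pi_pmf A d (\<lambda>x. bind_pmf (P x) (\<lambda>a. bind_pmf (Q x) (\<lambda>b. return_pmf (c a b))))"
    by (simp add: pair_pmf_def map_pmf_def bind_assoc_pmf bind_return_pmf)
  also have "\<dots> = bind_pmf (Pi_pmf A d P) (\<lambda>f.
      Pi_pmf A d (\<lambda>x. bind_pmf (Q x) (\<lambda>b. return_pmf (c (f x) b))))"
    by (rule Pi_pmf_bind[OF A])
  also have "\<dots> = bind_pmf (Pi_pmf A d P) (\<lambda>f. bind_pmf (Pi_pmf A d Q) (\<lambda>g.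
      Pi_pmf A d (\<lambda>x. return_pmf (c (f x) (g x)))))"
    by (subst Pi_pmf_bind[OF A]) (rule refl)
  also have "\<dots> = bind_pmf (Pi_pmf A d P) (\<lambda>f. bind_pmf (Pi_pmf A d Q) (\<lambda>g.
      return_pmf (\<lambda>x. c (f x) (g x))))"
  proof (intro bind_pmf_cong refl)
    fix f g assume "f \<in> set_pmf (Pi_pmf A d P)" "g \<in> set_pmf (Pi_pmf A d Q)"
    then have "\<And>x. x \<notin> A \<Longrightarrow> f x = d \<and> g x = d"
      using set_Pi_pmf_subset[OF A, of d P] set_Pi_pmf_subset[OF A, of d Q] by auto
    then show "Pi_pmf A d (\<lambda>x. return_pmf (c (f x) (g x))) = return_pmf (\<lambda>x. c (f x) (g x))"
      using A c by (auto simp: fun_eq_iff)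
  qed
  also have "\<dots> = map_pmf (\<lambda>(f, g) x. c (f x) (g x)) (pair_pmf (Pi_pmf A d P) (Pi_pmf A d Q))"
    by (simp add: pair_pmf_def map_pmf_def bind_assoc_pmf bind_return_pmf)
  finally show ?thesis ..
qed

definition xor_prob :: "real \<Rightarrow> real \<Rightarrow> real" where
  "xor_prob p q = p * (1 - q) + q * (1 - p)"

lemma xor_prob_bounds:
  assumes "0 \<le> p" "p \<le> 1" "0 \<le> q" "q \<le> 1"
  shows "0 \<le> xor_prob p q" "xor_prob p q \<le> 1"
proof -
  have "0 \<le> p * (1 - q)" "0 \<le> q * (1 - p)" "0 \<le> p * q" "0 \<le> (1 - p) * (1 - q)"
    using assms by simp_all
  then show "0 \<le> xor_prob p q" "xor_prob p q \<le> 1"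
    by (simp_all add: xor_prob_def algebra_simps)
qed

lemma xor_prob_less_half:
  assumes "p < 1/2" "q < 1/2"
  shows "xor_prob p q < 1/2"
proof -
  have "1/2 - xor_prob p q = 2 * ((1/2 - p) * (1/2 - q))"
    by (simp add: xor_prob_def algebra_simps)
  moreover have "(1/2 - p) * (1/2 - q) > 0" using assms by simp
  ultimately show ?thesis by simp
qed

lemma bernoulli_xor:
  assumes "0 \<le> p" "p \<le> 1" "0 \<le> q" "q \<le> 1"
  shows "map_pmf (\<lambda>(a, b). a \<noteq> b) (pair_pmf (bernoulli_pmf p) (bernoulli_pmf q))
       = bernoulli_pmf (xor_prob p q)"
proof (rule pmf_eqI)
  fix b :: bool
  have "{(x, y). (x \<noteq> y) = b} = (if b then {(True, False), (False, True)} else {(True, True), (False, False)})"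
    by auto
  then show "pmf (map_pmf (\<lambda>(a, b). a \<noteq> b) (pair_pmf (bernoulli_pmf p) (bernoulli_pmf q))) b
      = pmf (bernoulli_pmf (xor_prob p q)) b"
    using assms xor_prob_bounds[OF assms]
    by (cases b) (simp_all add: pmf_map vimage_def case_prod_unfold measure_measure_pmf_finite
        pmf_pair xor_prob_def algebra_simps)
qed

definition parallel_bsc :: "nat \<Rightarrow> real \<Rightarrow> bool \<Rightarrow> bool list \<Rightarrow> real" where
  "parallel_bsc K p x y = (\<Prod>i<K. pmf (bernoulli_pmf p) (x \<noteq> y ! i))"

lemma parallel_bsc_nonneg: "parallel_bsc K p x y \<ge> 0"
  by (simp add: parallel_bsc_def prod_nonneg)

lemma sum_parallel_bsc: "(\<Sum>y | length y = K. parallel_bsc K p x y) = 1"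
proof -
  have "(\<Sum>b\<in>UNIV. pmf (bernoulli_pmf p) b) = 1"
    by (rule sum_pmf_eq_1) auto
  then show ?thesis
    unfolding parallel_bsc_def sum_lists_length_prod[of "\<lambda>i b. pmf (bernoulli_pmf p) (x \<noteq> b)"]
    by (cases x) (simp_all add: UNIV_bool add.commute)
qed

lemma sum_sqrt_parallel_bsc:
  assumes "0 \<le> p" "p \<le> 1"
  shows "(\<Sum>y | length y = K. sqrt (parallel_bsc K p True y * parallel_bsc K p False y))
       = (2 * sqrt (p * (1 - p))) ^ K"
proof -
  have "(\<Sum>y | length y = K. sqrt (parallel_bsc K p True y * parallel_bsc K p False y))
      = (\<Sum>y | length y = K. \<Prod>i<K. sqrt (pmf (bernoulli_pmf p) (\<not> y ! i) * pmf (bernoulli_pmf p) (y ! i)))"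
    by (simp add: parallel_bsc_def real_sqrt_prod flip: prod.distrib)
  also have "\<dots> = (2 * sqrt (p * (1 - p))) ^ K"
    unfolding sum_lists_length_prod[of "\<lambda>i b. sqrt (pmf (bernoulli_pmf p) (\<not> b) * pmf (bernoulli_pmf p) b)"]
    using assms by (simp add: UNIV_bool mult.commute)
  finally show ?thesis .
qed

section \<open>The forwarding network\<close>

text \<open>A bit forwarded at time \<open>t\<close> reaches the destination at time \<open>t + 1\<close>, so code symbol
  \<open>t\<close> is hit by the noise \<open>Z\<^sub>i[t] \<oplus> E\<^sub>i[t + 1]\<close>; network use 0 carries no information.\<close>
definition effective_noise ::
    "nat \<Rightarrow> nat \<Rightarrow> (nat \<times> nat \<Rightarrow> bool) \<times> (nat \<times> nat \<Rightarrow> bool) \<Rightarrow> nat \<times> nat \<Rightarrow> bool" where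
  "effective_noise K m ze =
     (\<lambda>(i, t). if i < K \<and> t < m then fst ze (i, t) \<noteq> snd ze (i, Suc t) else False)"

definition delayed_outputs :: "nat \<Rightarrow> nat \<Rightarrow> bool list list \<Rightarrow> nat \<Rightarrow> bool list" where
  "delayed_outputs K m obs = (\<lambda>t\<in>{..<m}. map (\<lambda>i. obs ! i ! Suc t) [0..<K])"

definition bsc_outputs :: "nat \<Rightarrow> nat \<Rightarrow> (nat \<Rightarrow> bool) \<Rightarrow> (nat \<times> nat \<Rightarrow> bool) \<Rightarrow> nat \<Rightarrow> bool list" where
  "bsc_outputs K m x N = (\<lambda>t\<in>{..<m}. map (\<lambda>i. x t \<noteq> N (i, t)) [0..<K])"

lemma noise_shift:
  "map_pmf (\<lambda>e a. if a \<in> {..<K} \<times> {..<m} then e (fst a, Suc (snd a)) else False) (noise K (Suc m) p)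
     = Pi_pmf ({..<K} \<times> {..<m}) False (\<lambda>_. bernoulli_pmf p)"
proof -
  define A' where "A' = {..<K} \<times> {1..<Suc m}"
  define h where "h a = (fst a, Suc (snd a))" for a :: "nat \<times> nat"
  have bij: "bij_betw h ({..<K} \<times> {..<m}) A'"
  proof (rule bij_betwI')
    fix y assume "y \<in> A'"
    then obtain i t where "y = (i, t)" "i < K" "1 \<le> t" "t < Suc m" by (auto simp: A'_def)
    then show "\<exists>x\<in>{..<K} \<times> {..<m}. y = h x"
      by (intro bexI[of _ "(i, t - 1)"]) (auto simp: h_def)
  qed (auto simp: h_def A'_def prod_eq_iff)
  have out: "\<And>x. x \<notin> {..<K} \<times> {..<m} \<Longrightarrow> h x \<notin> A'" by (auto simp: h_def A'_def)
  have "Pi_pmf ({..<K} \<times> {..<m}) False (\<lambda>_. bernoulli_pmf p)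
      = map_pmf (\<lambda>g. g \<circ> h) (Pi_pmf A' False (\<lambda>_. bernoulli_pmf p))"
    by (rule Pi_pmf_bij_betw[OF _ bij out]) simp
  also have "Pi_pmf A' False (\<lambda>_. bernoulli_pmf p)
      = map_pmf (\<lambda>f x. if x \<in> A' then f x else False) (noise K (Suc m) p)"
    unfolding noise_def by (rule Pi_pmf_subset) (auto simp: A'_def)
  finally show ?thesis
    by (simp add: map_pmf_comp) (intro map_pmf_cong refl, auto simp: fun_eq_iff h_def A'_def)
qed

lemma effective_noise_distrib:
  assumes "0 \<le> ps" "ps \<le> 1" "0 \<le> pd" "pd \<le> 1"
  shows "map_pmf (effective_noise K m) (pair_pmf (noise K (Suc m) ps) (noise K (Suc m) pd))
       = Pi_pmf ({..<K} \<times> {..<m}) False (\<lambda>_. bernoulli_pmf (xor_prob ps pd))"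
proof -
  define A where "A = {..<K} \<times> {..<m}"
  define R where "R z a = (if a \<in> A then z a else False)" for z :: "nat \<times> nat \<Rightarrow> bool" and a
  define S where "S e a = (if a \<in> A then e (fst a, Suc (snd a)) else False)"
    for e :: "nat \<times> nat \<Rightarrow> bool" and a
  have "effective_noise K m = (\<lambda>(f, g) x. f x \<noteq> g x) \<circ> (\<lambda>(z, e). (R z, S e))"
    by (auto simp: fun_eq_iff effective_noise_def R_def S_def A_def)
  then have "map_pmf (effective_noise K m) (pair_pmf (noise K (Suc m) ps) (noise K (Suc m) pd))
      = map_pmf (\<lambda>(f, g) x. f x \<noteq> g x) (pair_pmf (map_pmf R (noise K (Suc m) ps)) (map_pmf S (noise K (Suc m) pd)))"
    by (simp add: map_pmf_compose map_pair)
  also have "map_pmf R (noise K (Suc m) ps) = Pi_pmf A False (\<lambda>_. bernoulli_pmf ps)"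
    unfolding R_def noise_def A_def by (rule Pi_pmf_subset[symmetric]) auto
  also have "map_pmf S (noise K (Suc m) pd) = Pi_pmf A False (\<lambda>_. bernoulli_pmf pd)"
    unfolding S_def A_def by (rule noise_shift)
  also have "map_pmf (\<lambda>(f, g) x. f x \<noteq> g x)
      (pair_pmf (Pi_pmf A False (\<lambda>_. bernoulli_pmf ps)) (Pi_pmf A False (\<lambda>_. bernoulli_pmf pd)))
      = Pi_pmf A False (\<lambda>_. map_pmf (\<lambda>(a, b). a \<noteq> b) (pair_pmf (bernoulli_pmf ps) (bernoulli_pmf pd)))"
    by (rule map_pmf_pair_Pi_pmf) (auto simp: A_def)
  also have "\<dots> = Pi_pmf A False (\<lambda>_. bernoulli_pmf (xor_prob ps pd))"
    by (simp only: bernoulli_xor[OF assms])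
  finally show ?thesis by (simp add: A_def)
qed

lemma relay_out_fwd_relay_Suc: "relay_out fwd_relay enc w z i (Suc t) = relay_in enc w z i t"
  unfolding relay_out_def fwd_relay_def by (simp del: upt_Suc add: upt_Suc_append)

lemma delayed_outputs_fwd_relay:
  "delayed_outputs K m (dest_obs K (Suc m) fwd_relay enc w z e)
     = bsc_outputs K m (enc w) (effective_noise K m (z, e))"
  unfolding delayed_outputs_def bsc_outputs_def
proof (intro restrict_ext map_cong refl)
  fix t i assume "t \<in> {..<m}" "i \<in> set [0..<K]"
  then show "dest_obs K (Suc m) fwd_relay enc w z e ! i ! Suc t = (enc w t \<noteq> effective_noise K m (z, e) (i, t))"
    by (simp del: upt_Suc add: dest_obs_def relay_out_fwd_relay_Suc relay_in_def effective_noise_def)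
      blast
qed

lemma bsc_outputs_eq_iff:
  assumes "g \<in> PiE {..<m} (\<lambda>_. {ys. length ys = K})"
  shows "bsc_outputs K m x N = g \<longleftrightarrow> (\<forall>i<K. \<forall>t<m. N (i, t) = (x t \<noteq> g t ! i))"
proof -
  have "bsc_outputs K m x N = g \<longleftrightarrow> (\<forall>t<m. map (\<lambda>i. x t \<noteq> N (i, t)) [0..<K] = g t)"
    using assms by (auto simp: bsc_outputs_def fun_eq_iff PiE_def extensional_def)
  also have "\<dots> \<longleftrightarrow> (\<forall>i<K. \<forall>t<m. N (i, t) = (x t \<noteq> g t ! i))"
    using assms by (auto simp: list_eq_iff_nth_eq PiE_def)
  finally show ?thesis .
qed

lemma pmf_bsc_outputs:
  assumes "g \<in> PiE {..<m} (\<lambda>_. {ys. length ys = K})"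
  shows "pmf (map_pmf (bsc_outputs K m x) (Pi_pmf ({..<K} \<times> {..<m}) False (\<lambda>_. bernoulli_pmf p))) g
       = memoryless (parallel_bsc K p) m x g"
proof -
  have "bsc_outputs K m x -` {g} = Pi ({..<K} \<times> {..<m}) (\<lambda>(i, t). {x t \<noteq> g t ! i})"
    unfolding set_eq_iff vimage_singleton_eq bsc_outputs_eq_iff[OF assms] Pi_iff by auto
  then have "pmf (map_pmf (bsc_outputs K m x) (Pi_pmf ({..<K} \<times> {..<m}) False (\<lambda>_. bernoulli_pmf p))) g
      = (\<Prod>(i, t)\<in>{..<K} \<times> {..<m}. measure_pmf.prob (bernoulli_pmf p) {x t \<noteq> g t ! i})"
    unfolding pmf_map by (simp add: measure_Pi_pmf_Pi case_prod_unfold)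
  also have "\<dots> = (\<Prod>i<K. \<Prod>t<m. pmf (bernoulli_pmf p) (x t \<noteq> g t ! i))"
    by (simp add: prod.cartesian_product measure_pmf_single)
  also have "\<dots> = memoryless (parallel_bsc K p) m x g"
    unfolding memoryless_def parallel_bsc_def by (rule prod.swap)
  finally show ?thesis .
qed

lemma prob_fwd_network:
  assumes "0 \<le> ps" "ps \<le> 1" "0 \<le> pd" "pd \<le> 1"
  shows "measure_pmf.prob (pair_pmf (noise K (Suc m) ps) (noise K (Suc m) pd))
           {(z, e). P (delayed_outputs K m (dest_obs K (Suc m) fwd_relay enc w z e))}
       = (\<Sum>y\<in>PiE {..<m} (\<lambda>_. {ys. length ys = K}).
            memoryless (parallel_bsc K (xor_prob ps pd)) m (enc w) y * of_bool (P y))"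
proof -
  define Ys where "Ys = PiE {..<m} (\<lambda>_. {ys :: bool list. length ys = K})"
  define N where "N = Pi_pmf ({..<K} \<times> {..<m}) False (\<lambda>_. bernoulli_pmf (xor_prob ps pd))"
  have Ys: "finite Ys"
    unfolding Ys_def using finite_lists_length_eq[of "UNIV :: bool set" K] by (intro finite_PiE) simp_all
  have "bsc_outputs K m (enc w) M \<in> Ys" for M
    by (simp add: Ys_def bsc_outputs_def restrict_PiE_iff)
  then have support: "set_pmf (map_pmf (bsc_outputs K m (enc w)) N) \<subseteq> Ys"
    by auto
  have "{(z, e). P (delayed_outputs K m (dest_obs K (Suc m) fwd_relay enc w z e))}
      = effective_noise K m -` (bsc_outputs K m (enc w) -` {y. P y})"
    by (auto simp: delayed_outputs_fwd_relay)
  then have "measure_pmf.prob (pair_pmf (noise K (Suc m) ps) (noise K (Suc m) pd))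
        {(z, e). P (delayed_outputs K m (dest_obs K (Suc m) fwd_relay enc w z e))}
      = measure_pmf.prob (map_pmf (bsc_outputs K m (enc w))
          (map_pmf (effective_noise K m) (pair_pmf (noise K (Suc m) ps) (noise K (Suc m) pd)))) {y. P y}"
    by (simp only: measure_map_pmf)
  also have "\<dots> = measure_pmf.prob (map_pmf (bsc_outputs K m (enc w)) N) {y. P y}"
    by (simp only: effective_noise_distrib[OF assms] N_def)
  also have "\<dots> = (\<Sum>y\<in>Ys. pmf (map_pmf (bsc_outputs K m (enc w)) N) y * of_bool (P y))"
    by (subst measure_pmf_eq_sum_support[OF Ys support]) simp
  finally show ?thesis
    unfolding N_def Ys_def by (simp add: pmf_bsc_outputs cong: sum.cong)
qed

lemma coded_fwd_joint_eq:
  assumes "0 \<le> ps" "ps \<le> 1" "0 \<le> pd" "pd \<le> 1"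
  shows "coded_fwd_joint K ps pd = bind_pmf (bernoulli_pmf (1/2)) (\<lambda>u.
           map_pmf (\<lambda>N. (u, map (\<lambda>i. u \<noteq> N i) [0..<K]))
             (Pi_pmf {..<K} False (\<lambda>_. bernoulli_pmf (xor_prob ps pd))))"
  unfolding coded_fwd_joint_def
proof (intro bind_pmf_cong refl)
  fix u :: bool
  let ?Z = "Pi_pmf {..<K} False (\<lambda>_. bernoulli_pmf ps)" and ?E = "Pi_pmf {..<K} False (\<lambda>_. bernoulli_pmf pd)"
  have "bind_pmf ?Z (\<lambda>z. bind_pmf ?E (\<lambda>e. return_pmf (u, map (\<lambda>i. (u \<noteq> z i) \<noteq> e i) [0..<K])))
      = map_pmf (\<lambda>N. (u, map (\<lambda>i. u \<noteq> N i) [0..<K])) (map_pmf (\<lambda>(f, g) x. f x \<noteq> g x) (pair_pmf ?Z ?E))"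
    by (simp add: pair_pmf_def map_pmf_def bind_assoc_pmf bind_return_pmf)
      (intro bind_pmf_cong refl arg_cong[where f = return_pmf] arg_cong2[where f = Pair] map_cong; blast)
  also have "map_pmf (\<lambda>(f, g) x. f x \<noteq> g x) (pair_pmf ?Z ?E)
      = Pi_pmf {..<K} False (\<lambda>_. map_pmf (\<lambda>(a, b). a \<noteq> b) (pair_pmf (bernoulli_pmf ps) (bernoulli_pmf pd)))"
    by (rule map_pmf_pair_Pi_pmf) auto
  also have "\<dots> = Pi_pmf {..<K} False (\<lambda>_. bernoulli_pmf (xor_prob ps pd))"
    by (simp only: bernoulli_xor[OF assms])
  finally show "bind_pmf ?Z (\<lambda>z. bind_pmf ?E (\<lambda>e. return_pmf (u, map (\<lambda>i. (u \<noteq> z i) \<noteq> e i) [0..<K])))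
      = map_pmf (\<lambda>N. (u, map (\<lambda>i. u \<noteq> N i) [0..<K])) (Pi_pmf {..<K} False (\<lambda>_. bernoulli_pmf (xor_prob ps pd)))" .
qed

lemma pmf_parallel_bsc_outputs:
  "pmf (map_pmf (\<lambda>N. map (\<lambda>i. x \<noteq> N i) [0..<K]) (Pi_pmf {..<K} False (\<lambda>_. bernoulli_pmf p))) y
     = (if length y = K then parallel_bsc K p x y else 0)"
proof (cases "length y = K")
  case True
  then have "map (\<lambda>i. x \<noteq> N i) [0..<K] = y \<longleftrightarrow> (\<forall>i<K. N i = (x \<noteq> y ! i))" for N
    by (auto simp: list_eq_iff_nth_eq)
  then have "(\<lambda>N. map (\<lambda>i. x \<noteq> N i) [0..<K]) -` {y} = Pi {..<K} (\<lambda>i. {x \<noteq> y ! i})"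
    unfolding set_eq_iff vimage_singleton_eq Pi_iff by auto
  with True show ?thesis
    by (simp add: pmf_map measure_Pi_pmf_Pi measure_pmf_single parallel_bsc_def)
next
  case False
  then have "(\<lambda>N. map (\<lambda>i. x \<noteq> N i) [0..<K]) -` {y} = {}" by auto
  with False show ?thesis by (simp add: pmf_map)
qed

lemma pmf_coded_fwd_joint:
  assumes "0 \<le> ps" "ps \<le> 1" "0 \<le> pd" "pd \<le> 1"
  shows "pmf (coded_fwd_joint K ps pd) (u, y)
       = (if length y = K then parallel_bsc K (xor_prob ps pd) u y / 2 else 0)"
proof -
  have Pair: "pmf (map_pmf (\<lambda>N. (u', f N)) M) (u, y) = of_bool (u = u') * pmf (map_pmf f M) y"
    for u' :: bool and f :: "(nat \<Rightarrow> bool) \<Rightarrow> bool list" and M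
    by (cases "u = u'") (simp_all add: pmf_map vimage_def)
  show ?thesis
    unfolding coded_fwd_joint_eq[OF assms] pmf_bind Pair pmf_parallel_bsc_outputs
    by (cases u) simp_all
qed

lemma R_coded_f_eq:
  assumes "0 \<le> ps" "ps \<le> 1" "0 \<le> pd" "pd \<le> 1"
  shows "R_coded_f K ps pd = mutual_info_uniform (parallel_bsc K (xor_prob ps pd)) {ys. length ys = K}"
  unfolding R_coded_f_def
  by (rule mutual_info_pmf_uniform_input) (simp_all add: sum_parallel_bsc pmf_coded_fwd_joint[OF assms])

section \<open>Capacity\<close>

lemma dest_obs_truncate:
  "dest_obs K n rel enc w z e = dest_obs K n rel (\<lambda>_ t. if t < n then enc w t else False) 0 z e"
  unfolding dest_obs_def relay_out_def relay_in_def
  by (intro map_cong refl arg_cong2[where f = "(\<noteq>)"] arg_cong[where f = "rel _ _"]) auto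

lemma sum_prob_fibres_le_1:
  assumes "finite S"
  shows "(\<Sum>w\<in>S. measure_pmf.prob P {x. f x = w}) \<le> 1"
proof -
  have "(\<Sum>w\<in>S. measure_pmf.prob P {x. f x = w}) = (\<Sum>w\<in>S. pmf (map_pmf f P) w)"
    by (simp add: pmf_map vimage_def)
  also have "\<dots> = measure_pmf.prob (map_pmf f P) S"
    by (rule measure_measure_pmf_finite[symmetric]) (rule assms)
  also have "\<dots> \<le> 1" by (rule measure_pmf.prob_le_1)
  finally show ?thesis .
qed

text \<open>Messages whose codewords agree on the \<open>n\<close> transmitted symbols induce the same law of the
  observations, so their probabilities of correct decoding add up to at most one; hence at most
  \<open>2 ^ n\<close> messages are decoded correctly on average.\<close>
lemma error_prob_ge:
  assumes M: "M > 0"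
  shows "1 - 2 ^ n / real M \<le> error_prob K ps pd n M enc rel dec"
proof -
  define P where "P = pair_pmf (noise K n ps) (noise K n pd)"
  define cw where "cw = (\<lambda>w t. if t < n then enc w t else False)"
  define Q where "Q c v = measure_pmf.prob P {ze. dec (dest_obs K n rel (\<lambda>_. c) 0 (fst ze) (snd ze)) = v}"
    for c v
  define T where "T = PiE_dflt {..<n} False (\<lambda>_. UNIV :: bool set)"
  have T: "finite T" "card T = 2 ^ n" "cw ` {..<M} \<subseteq> T"
    unfolding T_def by (auto intro!: finite_PiE_dflt simp: card_PiE_dflt)
      (auto simp: cw_def PiE_dflt_def)
  have error: "measure_pmf.prob P {(z, e). dec (dest_obs K n rel enc w z e) \<noteq> w} = 1 - Q (cw w) w" for w
  proof -
    have "{(z, e). dec (dest_obs K n rel enc w z e) \<noteq> w}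
        = UNIV - {ze. dec (dest_obs K n rel (\<lambda>_. cw w) 0 (fst ze) (snd ze)) = w}"
      by (auto simp: cw_def dest_obs_truncate[of K n rel enc w])
    then show ?thesis
      using measure_pmf.prob_compl[of "{ze. dec (dest_obs K n rel (\<lambda>_. cw w) 0 (fst ze) (snd ze)) = w}" P]
      by (simp add: Q_def)
  qed
  have "(\<Sum>w<M. Q (cw w) w) = (\<Sum>c\<in>T. \<Sum>w | w < M \<and> cw w = c. Q c w)"
    using sum.group[OF _ T(1,3), of "\<lambda>w. Q (cw w) w"] by (auto intro!: sum.cong)
  also have "\<dots> \<le> (\<Sum>c\<in>T. 1)"
    unfolding Q_def by (intro sum_mono sum_prob_fibres_le_1) auto
  finally have "(\<Sum>w<M. Q (cw w) w) \<le> 2 ^ n" using T by simp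
  moreover have "error_prob K ps pd n M enc rel dec = 1 - (\<Sum>w<M. Q (cw w) w) / real M"
    unfolding error_prob_def P_def[symmetric] error
    using M by (simp add: sum_subtractf field_simps)
  ultimately show ?thesis using M by (simp add: divide_right_mono)
qed

lemma achievable_with_le_1:
  assumes "achievable_with K ps pd Rel R"
  shows "R \<le> 1"
proof (rule ccontr)
  assume "\<not> R \<le> 1"
  then have "(\<lambda>n. (2 powr (1 - R)) ^ n) \<longlonglongrightarrow> 0"
    by (intro LIMSEQ_power_zero) (simp add: powr_less_one)
  then have "eventually (\<lambda>n. (2 powr (1 - R)) ^ n < 1/2) sequentially"
    by (rule order_tendstoD) simp
  then obtain N1 where N1: "\<And>n. n \<ge> N1 \<Longrightarrow> (2 powr (1 - R)) ^ n < 1/2"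
    unfolding eventually_sequentially by blast
  obtain N2 where N2: "\<And>n. n \<ge> N2 \<Longrightarrow> \<exists>enc rel dec. error_prob K ps pd n (nat \<lceil>2 powr (real n * R)\<rceil>) enc rel dec \<le> 1/4"
    using assms unfolding achievable_with_def by (meson zero_less_divide_1_iff zero_less_numeral)
  define n where "n = max N1 N2"
  define M where "M = nat \<lceil>2 powr (real n * R)\<rceil>"
  have M: "M > 0" "real M \<ge> 2 powr (real n * R)"
    unfolding M_def by (simp, linarith)
  obtain enc rel dec where "error_prob K ps pd n M enc rel dec \<le> 1/4"
    using N2[of n] by (auto simp: n_def M_def)
  moreover have "2 ^ n / real M \<le> (2 powr (1 - R)) ^ n"
  proof -
    have "2 ^ n / real M \<le> 2 powr real n / 2 powr (real n * R)"
      using M by (intro frac_le) (auto simp: powr_realpow)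
    also have "\<dots> = (2 powr (1 - R)) ^ n"
      by (simp add: powr_diff[symmetric] powr_power algebra_simps)
    finally show ?thesis .
  qed
  ultimately show False
    using error_prob_ge[OF M(1), of n K ps pd enc rel dec] N1[of n] by (simp add: n_def)
qed

lemma achievable_with_mono:
  "Rel \<subseteq> Rel' \<Longrightarrow> achievable_with K ps pd Rel R \<Longrightarrow> achievable_with K ps pd Rel' R"
  unfolding achievable_with_def by (meson subsetD)

lemma ex_fwd_code_error_le:
  assumes p: "0 \<le> ps" "ps \<le> 1" "0 \<le> pd" "pd \<le> 1" and \<rho>: "0 < \<rho>" "\<rho> \<le> 1"
  shows "\<exists>enc dec. error_prob K ps pd (Suc m) (nat \<lceil>2 powr (real (Suc m) * R)\<rceil>) enc fwd_relay dec
            \<le> 2 powr (\<rho> * R)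
               * (gallager_fn (parallel_bsc K (xor_prob ps pd)) {ys. length ys = K} \<rho> * 2 powr (\<rho> * R)) ^ m"
proof -
  let ?W = "parallel_bsc K (xor_prob ps pd)"
  let ?G = "gallager_fn ?W {ys. length ys = K} \<rho>"
  let ?Ys = "PiE {..<m} (\<lambda>_. {ys :: bool list. length ys = K})"
  define M where "M = nat \<lceil>2 powr (real (Suc m) * R)\<rceil>"
  have M: "M > 0" unfolding M_def by simp
  have "real M < 2 powr (real (Suc m) * R) + 1"
    using powr_gt_zero[of 2 "real (Suc m) * R"] unfolding M_def by linarith
  then have M_le: "real (M - 1) \<le> 2 powr (real (Suc m) * R)"
    using M by (simp add: of_nat_diff)
  have "finite {ys :: bool list. length ys = K}"
    using finite_lists_length_eq[of "UNIV :: bool set" K] by simp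
  from gallager_random_coding[OF parallel_bsc_nonneg this \<rho> M]
  obtain C where C: "(\<Sum>w<M. \<Sum>y\<in>?Ys. memoryless ?W m (C w) y * of_bool (ml_decode ?W m M C y \<noteq> w))
      \<le> real M * real (M - 1) powr \<rho> * ?G ^ m" ..
  define dec where "dec obs = ml_decode ?W m M C (delayed_outputs K m obs)" for obs
  have "error_prob K ps pd (Suc m) M C fwd_relay dec
      = (\<Sum>w<M. \<Sum>y\<in>?Ys. memoryless ?W m (C w) y * of_bool (ml_decode ?W m M C y \<noteq> w)) / real M"
  proof -
    have "measure_pmf.prob (pair_pmf (noise K (Suc m) ps) (noise K (Suc m) pd))
        {(z, e). dec (dest_obs K (Suc m) fwd_relay C w z e) \<noteq> w}
        = (\<Sum>y\<in>?Ys. memoryless ?W m (C w) y * of_bool (ml_decode ?W m M C y \<noteq> w))" for w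
      unfolding dec_def by (rule prob_fwd_network[OF p])
    then show ?thesis by (simp add: error_prob_def)
  qed
  also have "\<dots> \<le> real (M - 1) powr \<rho> * ?G ^ m"
    using C M by (simp add: divide_le_eq mult_ac)
  also have "\<dots> \<le> (2 powr (real (Suc m) * R)) powr \<rho> * ?G ^ m"
    using M_le \<rho> by (intro mult_right_mono powr_mono2) (auto simp: gallager_fn_nonneg)
  also have "(2 powr (real (Suc m) * R)) powr \<rho> = 2 powr (\<rho> * R + real m * (\<rho> * R))"
    by (simp add: powr_powr algebra_simps)
  also have "\<dots> = 2 powr (\<rho> * R) * (2 powr (\<rho> * R)) ^ m"
    by (simp add: powr_add powr_power mult.commute)
  also have "2 powr (\<rho> * R) * (2 powr (\<rho> * R)) ^ m * ?G ^ m = 2 powr (\<rho> * R) * (?G * 2 powr (\<rho> * R)) ^ m"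
    by (simp add: power_mult_distrib)
  finally show ?thesis unfolding M_def by blast
qed

theorem achievable_coded_fwd:
  assumes p: "0 \<le> ps" "ps \<le> 1" "0 \<le> pd" "pd \<le> 1" and R: "R < R_coded_f K ps pd"
  shows "achievable_with K ps pd {fwd_relay} R"
  unfolding achievable_with_def
proof (intro allI impI)
  fix \<epsilon> :: real assume "\<epsilon> > 0"
  let ?W = "parallel_bsc K (xor_prob ps pd)"
  obtain \<rho> where \<rho>: "0 < \<rho>" "\<rho> \<le> 1"
    and F: "gallager_fn ?W {ys. length ys = K} \<rho> * 2 powr (\<rho> * R) < 1"
    using gallager_exponent_pos[of ?W "{ys. length ys = K}" R] R
    by (auto simp: R_coded_f_eq[OF p] parallel_bsc_nonneg sum_parallel_bsc)
  define F where "F = gallager_fn ?W {ys. length ys = K} \<rho> * 2 powr (\<rho> * R)"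
  have "(\<lambda>m. 2 powr (\<rho> * R) * F ^ m) \<longlonglongrightarrow> 2 powr (\<rho> * R) * 0"
    using F by (intro tendsto_mult tendsto_const LIMSEQ_power_zero) (simp_all add: F_def gallager_fn_nonneg)
  then have "eventually (\<lambda>m. 2 powr (\<rho> * R) * F ^ m < \<epsilon>) sequentially"
    using \<open>\<epsilon> > 0\<close> by (intro order_tendstoD) simp_all
  then obtain N where N: "\<And>m. m \<ge> N \<Longrightarrow> 2 powr (\<rho> * R) * F ^ m < \<epsilon>"
    unfolding eventually_sequentially by blast
  show "\<exists>N. \<forall>n\<ge>N. \<exists>enc rel dec. rel \<in> {fwd_relay}
      \<and> error_prob K ps pd n (nat \<lceil>2 powr (real n * R)\<rceil>) enc rel dec \<le> \<epsilon>"
  proof (intro exI[of _ "Suc N"] allI impI)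
    fix n assume "n \<ge> Suc N"
    then obtain m where m: "n = Suc m" "m \<ge> N" by (cases n) auto
    from ex_fwd_code_error_le[OF p \<rho>, where K = K and m = m and R = R]
    obtain enc dec where "error_prob K ps pd n (nat \<lceil>2 powr (real n * R)\<rceil>) enc fwd_relay dec
        \<le> 2 powr (\<rho> * R) * F ^ m"
      unfolding F_def m(1) by blast
    then show "\<exists>enc rel dec. rel \<in> {fwd_relay}
        \<and> error_prob K ps pd n (nat \<lceil>2 powr (real n * R)\<rceil>) enc rel dec \<le> \<epsilon>"
      using N[OF m(2)] by (intro exI[of _ enc] exI[of _ fwd_relay] exI[of _ dec]) auto
  qed
qed

lemma capacity_bounds:
  assumes p: "0 \<le> ps" "ps \<le> 1" "0 \<le> pd" "pd \<le> 1"
  shows R_coded_f_le_capacity: "R_coded_f K ps pd \<le> capacity K ps pd"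
    and capacity_le_1: "capacity K ps pd \<le> 1"
proof -
  define S where "S = {R. achievable_with K ps pd UNIV R}"
  have below: "R \<in> S" if "R < R_coded_f K ps pd" for R
    using achievable_with_mono[OF subset_UNIV achievable_coded_fwd[OF p that]] by (simp add: S_def)
  have bdd: "bdd_above S"
    by (auto simp: S_def intro!: bdd_aboveI[of _ 1] achievable_with_le_1)
  show "R_coded_f K ps pd \<le> capacity K ps pd"
    unfolding capacity_def S_def[symmetric]
    by (rule dense_le) (use bdd below in \<open>auto intro: cSup_upper\<close>)
  show "capacity K ps pd \<le> 1"
    unfolding capacity_def S_def[symmetric]
    using below[of "R_coded_f K ps pd - 1"] by (intro cSup_least) (auto simp: S_def achievable_with_le_1)
qed

lemma one_minus_R_coded_f_le:
  assumes p: "0 \<le> ps" "ps \<le> 1" "0 \<le> pd" "pd \<le> 1"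
  defines "p \<equiv> xor_prob ps pd"
  shows "1 - R_coded_f K ps pd \<le> 2 / ln 2 * (2 * sqrt (p * (1 - p))) ^ K"
  using one_minus_mutual_info_le_bhattacharyya[of "parallel_bsc K p" "{ys. length ys = K}"]
    xor_prob_bounds[OF p]
  by (simp add: R_coded_f_eq[OF p] parallel_bsc_nonneg sum_parallel_bsc sum_sqrt_parallel_bsc p_def)

lemma bhattacharyya_bsc_less_1:
  assumes "p \<noteq> 1/2"
  shows "2 * sqrt (p * (1 - p)) < 1"
proof -
  have "1/4 - p * (1 - p) = (1/2 - p)\<^sup>2" by (simp add: power2_eq_square algebra_simps)
  moreover have "(1/2 - p)\<^sup>2 > 0" using assms by simp
  ultimately have "p * (1 - p) < 1/4" by linarith
  then have "sqrt (p * (1 - p)) < sqrt (1/4)" by (simp only: real_sqrt_less_iff)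
  also have "sqrt (1/4) = (1/2 :: real)" by (simp add: real_sqrt_divide)
  finally show ?thesis by simp
qed

theorem theorem9:
  fixes ps pd :: real
  assumes "0 \<le> ps" and "ps < 1/2" and "0 \<le> pd" and "pd < 1/2"
  shows "(\<forall>K R. R < R_coded_f K ps pd \<longrightarrow> achievable_with K ps pd {fwd_relay} R)
       \<and> (\<lambda>K. R_coded_f K ps pd - capacity K ps pd) \<longlonglongrightarrow> 0"
proof -
  have p: "0 \<le> ps" "ps \<le> 1" "0 \<le> pd" "pd \<le> 1" using assms by auto
  define \<beta> where "\<beta> = 2 * sqrt (xor_prob ps pd * (1 - xor_prob ps pd))"
  have \<beta>: "0 \<le> \<beta>" "\<beta> < 1"
    using xor_prob_bounds[OF p] xor_prob_less_half[of ps pd] assms bhattacharyya_bsc_less_1[of "xor_prob ps pd"]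
    by (auto simp: \<beta>_def)
  have gap: "- (2 / ln 2 * \<beta> ^ K) \<le> R_coded_f K ps pd - capacity K ps pd
      \<and> R_coded_f K ps pd - capacity K ps pd \<le> 0" for K
    using capacity_bounds[OF p, of K] one_minus_R_coded_f_le[OF p, of K] unfolding \<beta>_def by linarith
  have "(\<lambda>K. - (2 / ln 2 * \<beta> ^ K)) \<longlonglongrightarrow> - (2 / ln 2 * 0)"
    using \<beta> by (intro tendsto_minus tendsto_mult tendsto_const LIMSEQ_power_zero) simp
  then have lower: "(\<lambda>K. - (2 / ln 2 * \<beta> ^ K)) \<longlonglongrightarrow> 0"
    by simp
  have "(\<lambda>K. R_coded_f K ps pd - capacity K ps pd) \<longlonglongrightarrow> 0"
    by (rule tendsto_sandwich[OF _ _ lower tendsto_const]) (use gap in auto)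
  with achievable_coded_fwd[OF p] show ?thesis by blast
qed

end
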